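(* Fix integers $k\geq 2$, $a\in\mathbb{Z}$, $0\le s\le r$ with $r\ge 1$, and positive integers $A_1,\dots,A_r$. Let $P(y)=(y-a)^e\prod_{j=1}^t P_j(y)^{e_j}\in\mathbb{Z}[y]$ with $e\geq 1$, $e_j\ge 1$, where $P_1,\dots,P_t\in\mathbb{Z}[y]$ are distinct irreducible polynomials. Then the equation $$P(y)=\prod_{i=1}^s A_i^{n_i}n_i!\cdot\prod_{i=s+1}^r A_i^{n_i}n_i!!$$ has only finitely many solutions $(n_1,\dots,n_r,y)$ with $n_1,\dots,n_r$ positive integers and $y=x+a$ for some $x\in\mathcal{F}_k$.
   Context: For a positive integer $x=\prod_{i\in I}p_i^{\alpha_i}$ (prime factorization), $K(x)=\max_{i\in I}\alpha_i$ (with $K(1)=0$) and $\omega(x)=|I|$ is the number of distinct prime factors. $\mathcal{F}_k=\{x\in\mathbb{N}: K(x)<k\}$ (positive integers all of whose prime exponents are $<k$). $n!!$ is the double factorial. *)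

theory Defs
  imports "HOL-Computational_Algebra.Computational_Algebra"
begin

definition K :: "nat \<Rightarrow> nat" where
  "K x = (if prime_factors x = {} then 0 else Max ((\<lambda>p. multiplicity p x) ` prime_factors x))"

definition F :: "nat \<Rightarrow> nat set" where
  "F k = {x. x > 0 \<and> K x < k}"

fun dfact :: "nat \<Rightarrow> nat" where
  "dfact 0 = 1"
| "dfact (Suc 0) = 1"
| "dfact (Suc (Suc n)) = Suc (Suc n) * dfact n"

end

theory Submission
  imports Defs
begin

text \<open>
  If y = x + a with x in F k solves the equation, then x divides the right-hand side D,
  because (y - a)^e divides P(y). Every prime factor of D divides some A_i or is at most
  N = n_1 + ... + n_r, and all prime exponents of x are below k, so
  x <= (A_1 ... A_r * primorial N)^k <= (A_1 ... A_r * 4^N)^k by the Chebyshev bound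
  primorial N <= 4^N. Hence D = P(y) = O(x^(deg P)) grows at most exponentially in N,
  whereas D >= n_1!! ... n_r!! outgrows every exponential. So N is bounded, and for each of
  the finitely many tuples (n_i) the polynomial equation P(y) = D has finitely many roots.
\<close>

lemma dfact_pos: "dfact n > 0"
  by (induction n rule: dfact.induct) auto

lemma dfact_dvd_fact: "dfact n dvd fact n"
proof (induction n rule: dfact.induct)
  case (3 n)
  then have "Suc (Suc n) * dfact n dvd Suc (Suc n) * (Suc n * fact n)"
    by (intro mult_dvd_mono) auto
  then show ?case by (simp add: algebra_simps)
qed auto

lemma prime_dvd_dfact_imp_le: "prime p \<Longrightarrow> p dvd dfact n \<Longrightarrow> p \<le> n"
  using dfact_dvd_fact dvd_trans prime_dvd_fact_iff by blast

lemma power_le_dfact: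
  fixes c :: nat
  assumes "c \<ge> 1"
  shows "c ^ n \<le> c ^ (c * c + 2) * dfact n"
proof (induction n rule: less_induct)
  case (less n)
  show ?case
  proof (cases "n < c * c + 2")
    case True
    then have "c ^ n \<le> c ^ (c * c + 2)"
      using assms by (intro power_increasing) auto
    also have "\<dots> \<le> c ^ (c * c + 2) * dfact n"
      using dfact_pos[of n] by simp
    finally show ?thesis .
  next
    case False
    define m where "m = n - 2"
    with False have n: "n = Suc (Suc m)" and "c * c \<le> m"
      by auto
    then have "c ^ n = (c * c) * c ^ m" by simp
    also have "\<dots> \<le> n * (c ^ (c * c + 2) * dfact m)"
      using less[of m] n \<open>c * c \<le> m\<close> by (intro mult_le_mono) auto
    also have "\<dots> = c ^ (c * c + 2) * dfact n"
      using n by (simp add: algebra_simps)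
    finally show ?thesis .
  qed
qed

text \<open>Both \<^const>\<open>fact\<close> and \<^const>\<open>dfact\<close> are factorial-like, and these two properties are
  all that the finiteness argument uses of them.\<close>

definition factorial_like :: "(nat \<Rightarrow> nat) \<Rightarrow> bool" where
  "factorial_like f \<longleftrightarrow> (\<forall>m. dfact m \<le> f m) \<and> (\<forall>m p. prime p \<longrightarrow> p dvd f m \<longrightarrow> p \<le> m)"

lemma factorial_like_fact: "factorial_like fact"
  unfolding factorial_like_def
  using dfact_dvd_fact fact_gt_zero prime_dvd_fact_iff by (blast intro: dvd_imp_le)

lemma factorial_like_dfact: "factorial_like dfact"
  unfolding factorial_like_def using prime_dvd_dfact_imp_le by blast

definition primorial :: "nat \<Rightarrow> nat" where
  "primorial n = \<Prod>{p. prime p \<and> p \<le> n}"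

lemma binomial_odd_middle_le: "(2 * m + 1) choose m \<le> 4 ^ m"
proof -
  have "((2*m+1) choose m) + ((2*m+1) choose (m+1)) = (\<Sum>k\<in>{m, m+1}. (2*m+1) choose k)"
    by simp
  also have "\<dots> \<le> (\<Sum>k\<le>2*m+1. (2*m+1) choose k)"
    by (intro sum_mono2) auto
  also have "\<dots> = 2 ^ (2*m+1)"
    by (rule choose_row_sum)
  also have "\<dots> = 2 * 4 ^ m"
    by (simp add: power_mult)
  finally show ?thesis
    using binomial_symmetric[of m "2*m+1"] by simp
qed

lemma prod_primes_between_le: "\<Prod>{p. prime p \<and> m + 1 < p \<and> p \<le> 2 * m + 1} \<le> 4 ^ m"
proof -
  define S where "S = {p. prime p \<and> m + 1 < p \<and> p \<le> 2 * m + 1}"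
  have "\<Prod>S dvd \<Prod>{1..2*m+1}"
    by (rule prod_dvd_prod_subset) (auto simp: S_def prime_gt_0_nat Suc_leI)
  also have "\<dots> = fact m * fact (m + 1) * ((2*m+1) choose m)"
    using binomial_fact_lemma[of m "2*m+1"] by (simp add: fact_prod)
  finally have "\<Prod>S dvd fact m * fact (m + 1) * ((2*m+1) choose m)" .
  moreover have "coprime (\<Prod>S) (fact m * fact (m + 1))"
  proof (rule prod_coprime_left)
    fix p assume "p \<in> S"
    then have "prime p" and "m + 1 < p"
      by (auto simp: S_def)
    then have "\<not> p dvd fact m * fact (m + 1)"
      by (auto simp only: prime_dvd_mult_iff prime_dvd_fact_iff)
    with \<open>prime p\<close> show "coprime p (fact m * fact (m + 1))"
      by (rule prime_imp_coprime)
  qed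
  ultimately have "\<Prod>S dvd (2*m+1) choose m"
    by (metis coprime_dvd_mult_right_iff mult.commute)
  then have "\<Prod>S \<le> (2*m+1) choose m"
    by (rule dvd_imp_le) (simp add: zero_less_binomial)
  also have "\<dots> \<le> 4 ^ m"
    by (rule binomial_odd_middle_le)
  finally show ?thesis
    unfolding S_def .
qed

lemma primorial_le: "primorial n \<le> 4 ^ n"
proof (induction n rule: less_induct)
  case (less n)
  have "n \<le> 2 \<or> even n \<and> n > 2 \<or> (\<exists>m. n = 2 * m + 1 \<and> m \<ge> 1)"
    by presburger
  then consider "n \<le> 2" | "even n" "n > 2" | m where "n = 2 * m + 1" "m \<ge> 1"
    by blast
  then show ?case
  proof cases
    case 1
    then have "{p. prime p \<and> p \<le> n} \<subseteq> {2}"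
      by (auto dest: prime_ge_2_nat)
    then have "primorial n dvd \<Prod>{2}"
      unfolding primorial_def by (intro prod_dvd_prod_subset) auto
    then have "primorial n \<le> 2"
      by (simp add: dvd_imp_le)
    show ?thesis
    proof (cases "n = 0")
      case True
      then have no_primes: "{p. prime p \<and> p \<le> n} = {}"
        by auto
      show ?thesis
        unfolding primorial_def no_primes by simp
    next
      case False
      then have "2 \<le> (4::nat) ^ n"
        using power_increasing[of 1 n "4::nat"] by simp
      with \<open>primorial n \<le> 2\<close> show ?thesis
        by linarith
    qed
  next
    case 2
    then have "\<not> prime n"
      using prime_odd_nat[of n] by blast
    then have "prime p \<and> p \<le> n \<longleftrightarrow> prime p \<and> p \<le> n - 1" for p
      by (cases "p = n") auto
    then have "{p. prime p \<and> p \<le> n} = {p. prime p \<and> p \<le> n - 1}"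
      by blast
    then have "primorial n = primorial (n - 1)"
      by (simp add: primorial_def)
    also have "\<dots> \<le> 4 ^ (n - 1)"
      using less 2 by simp
    also have "\<dots> \<le> 4 ^ n"
      by (intro power_increasing) auto
    finally show ?thesis .
  next
    case 3
    have split: "{p. prime p \<and> p \<le> n}
        = {p. prime p \<and> p \<le> m + 1} \<union> {p. prime p \<and> m + 1 < p \<and> p \<le> 2 * m + 1}"
      using 3 by auto
    have "primorial n = primorial (m + 1) * \<Prod>{p. prime p \<and> m + 1 < p \<and> p \<le> 2 * m + 1}"
      unfolding primorial_def split by (rule prod.union_disjoint) auto
    also have "\<dots> \<le> 4 ^ (m + 1) * 4 ^ m"
      using less[of "m + 1"] 3 prod_primes_between_le[of m] by (intro mult_le_mono) auto
    also have "\<dots> = 4 ^ n"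
      using 3 by (simp add: power_add[symmetric])
    finally show ?thesis .
  qed
qed

lemma multiplicity_le_K: "p \<in> prime_factors x \<Longrightarrow> multiplicity p x \<le> K x"
  unfolding K_def by (auto intro: Max_ge)

lemma F_le_prod_prime_factors_power:
  assumes "x \<in> F k"
  shows "x \<le> (\<Prod>(prime_factors x)) ^ k"
proof -
  have "x > 0" and "K x < k"
    using assms by (auto simp: F_def)
  then have "x = (\<Prod>p\<in>prime_factors x. p ^ multiplicity p x)"
    by (simp add: prod_prime_factors)
  also have "\<dots> \<le> (\<Prod>p\<in>prime_factors x. p ^ k)"
  proof (rule prod_mono)
    fix p assume p: "p \<in> prime_factors x"
    then have "1 \<le> p"
      by (simp add: Suc_leI prime_factors_gt_0_nat)
    moreover have "multiplicity p x \<le> k"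
      using multiplicity_le_K[OF p] \<open>K x < k\<close> by simp
    ultimately show "0 \<le> p ^ multiplicity p x \<and> p ^ multiplicity p x \<le> p ^ k"
      by (simp add: power_increasing)
  qed
  also have "\<dots> = (\<Prod>(prime_factors x)) ^ k"
    by (simp add: prod_power_distrib)
  finally show ?thesis .
qed

lemma prod_prime_factors_dvd: "\<Prod>(prime_factors m) dvd (m :: nat)"
proof (cases "m = 0")
  case False
  have "\<Prod>(prime_factors m) dvd (\<Prod>p\<in>prime_factors m. p ^ multiplicity p m)"
    by (intro prod_dvd_prod) (simp add: prime_factors_multiplicity)
  also have "\<dots> = m"
    using False by (simp add: prod_prime_factors)
  finally show ?thesis .
qed simp

lemma F_le_if_prime_divisors_bounded:
  assumes "x \<in> F k" and "M > 0"
    and "\<And>p. prime p \<Longrightarrow> p dvd x \<Longrightarrow> p dvd M \<or> p \<le> N"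
  shows "x \<le> (M * 4 ^ N) ^ k"
proof -
  define S where "S = {p. prime p \<and> p \<le> N}"
  have "prime_factors x \<subseteq> prime_factors M \<union> S"
    using assms(2) by (auto simp: S_def in_prime_factors_iff dest: assms(3))
  then have "\<Prod>(prime_factors x) dvd \<Prod>(prime_factors M \<union> S)"
    by (intro prod_dvd_prod_subset) (auto simp: S_def)
  also have "\<dots> dvd \<Prod>(prime_factors M) * \<Prod>S"
  proof -
    have "\<Prod>(prime_factors M \<union> S) * \<Prod>(prime_factors M \<inter> S) = \<Prod>(prime_factors M) * \<Prod>S"
      by (rule prod.union_inter) (auto simp: S_def)
    then show ?thesis
      by (metis dvd_triv_left)
  qed
  also have "\<dots> dvd M * primorial N"
    unfolding S_def primorial_def by (intro mult_dvd_mono prod_prime_factors_dvd) simp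
  finally have "\<Prod>(prime_factors x) \<le> M * primorial N"
    using assms(2) by (intro dvd_imp_le) (auto simp: primorial_def prime_gt_0_nat)
  also have "\<dots> \<le> M * 4 ^ N"
    by (simp add: primorial_le)
  finally have "\<Prod>(prime_factors x) \<le> M * 4 ^ N" .
  then show ?thesis
    using F_le_prod_prime_factors_power[OF assms(1)] by (meson order_trans power_mono zero_le)
qed

lemma poly_abs_le_coeff_sum:
  fixes Q :: "'a::linordered_idom poly" and x :: 'a
  assumes "x \<ge> 1"
  shows "\<bar>poly Q x\<bar> \<le> (\<Sum>i\<le>degree Q. \<bar>coeff Q i\<bar>) * x ^ degree Q"
proof -
  have "\<bar>poly Q x\<bar> \<le> (\<Sum>i\<le>degree Q. \<bar>coeff Q i * x ^ i\<bar>)"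
    unfolding poly_altdef by (rule sum_abs)
  also have "\<dots> \<le> (\<Sum>i\<le>degree Q. \<bar>coeff Q i\<bar> * x ^ degree Q)"
  proof (rule sum_mono)
    fix i assume "i \<in> {..degree Q}"
    then have "\<bar>x ^ i\<bar> \<le> x ^ degree Q"
      using assms by (simp add: power_increasing)
    then show "\<bar>coeff Q i * x ^ i\<bar> \<le> \<bar>coeff Q i\<bar> * x ^ degree Q"
      by (simp add: abs_mult mult_left_mono)
  qed
  also have "\<dots> = (\<Sum>i\<le>degree Q. \<bar>coeff Q i\<bar>) * x ^ degree Q"
    by (simp add: sum_distrib_right)
  finally show ?thesis .
qed

lemma prime_dvd_prod_factorial_like:
  fixes A m :: "'i \<Rightarrow> nat" and g :: "'i \<Rightarrow> nat \<Rightarrow> nat"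
  assumes "finite I" and "\<forall>i\<in>I. factorial_like (g i)" and "prime p"
    and "p dvd (\<Prod>i\<in>I. A i ^ m i * g i (m i))"
  shows "p dvd (\<Prod>i\<in>I. A i) \<or> p \<le> (\<Sum>i\<in>I. m i)"
proof -
  obtain i where i: "i \<in> I" and "p dvd A i ^ m i * g i (m i)"
    using assms(1,3,4) by (auto simp: prime_dvd_prod_iff)
  then have "p dvd A i \<or> p \<le> m i"
    using assms(2,3) by (auto simp: prime_dvd_mult_iff factorial_like_def dest: prime_dvd_power)
  moreover have "A i dvd (\<Prod>i\<in>I. A i)" and "m i \<le> (\<Sum>i\<in>I. m i)"
    using assms(1) i by (auto intro: dvd_prodI member_le_sum)
  ultimately show ?thesis
    by (meson dvd_trans order_trans)
qed

lemma power_sum_le_prod_dfact: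
  fixes c :: nat and m :: "'i \<Rightarrow> nat"
  assumes "c \<ge> 1"
  shows "c ^ (\<Sum>i\<in>I. m i) \<le> (c ^ (c * c + 2)) ^ card I * (\<Prod>i\<in>I. dfact (m i))"
proof (cases "finite I")
  case True
  have "c ^ (\<Sum>i\<in>I. m i) = (\<Prod>i\<in>I. c ^ m i)"
    by (rule power_sum)
  also have "\<dots> \<le> (\<Prod>i\<in>I. c ^ (c * c + 2) * dfact (m i))"
    by (intro prod_mono conjI zero_le power_le_dfact[OF assms])
  also have "\<dots> = (c ^ (c * c + 2)) ^ card I * (\<Prod>i\<in>I. dfact (m i))"
    by (simp add: prod.distrib)
  finally show ?thesis .
qed simp

lemma sum_exponents_bound:
  fixes A m :: "'i \<Rightarrow> nat" and g :: "'i \<Rightarrow> nat \<Rightarrow> nat"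
  assumes I: "finite I" and A: "\<forall>i\<in>I. A i > 0" and g: "\<forall>i\<in>I. factorial_like (g i)"
    and x: "x \<in> F k" and x_dvd: "x dvd D" and D_le: "D \<le> C * x ^ d"
    and D: "D = (\<Prod>i\<in>I. A i ^ m i * g i (m i))"
  defines "E \<equiv> 2 * 4 ^ (k * d)"
  shows "(\<Sum>i\<in>I. m i) < (E ^ (E * E + 2)) ^ card I * C * (\<Prod>i\<in>I. A i) ^ (k * d)"
proof -
  define N where "N = (\<Sum>i\<in>I. m i)"
  define M where "M = (\<Prod>i\<in>I. A i)"
  define H where "H = (E ^ (E * E + 2)) ^ card I"
  have "M > 0"
    unfolding M_def using A by (intro prod_pos) auto
  have "x \<le> (M * 4 ^ N) ^ k"
    using x \<open>M > 0\<close> proof (rule F_le_if_prime_divisors_bounded)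
    fix p assume "prime p" and "p dvd x"
    then show "p dvd M \<or> p \<le> N"
      using prime_dvd_prod_factorial_like[OF I g] x_dvd D
      unfolding M_def N_def by (meson dvd_trans)
  qed
  \<comment> \<open>E is chosen so that the factor 4^(N k d) coming from x^d \<le> (M 4^N)^(k d) cancels.\<close>
  have "2 ^ N * 4 ^ (N * (k * d)) = E ^ N"
    by (simp add: E_def power_mult_distrib flip: power_mult)
  also have "\<dots> \<le> H * (\<Prod>i\<in>I. dfact (m i))"
    unfolding H_def N_def E_def by (intro power_sum_le_prod_dfact) simp
  also have "\<dots> \<le> H * D"
  proof -
    have "dfact (m i) \<le> A i ^ m i * g i (m i)" if "i \<in> I" for i
    proof -
      have "dfact (m i) \<le> g i (m i)"
        using g that by (simp add: factorial_like_def)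
      also have "\<dots> \<le> A i ^ m i * g i (m i)"
        using A that by (simp add: Suc_leI)
      finally show ?thesis .
    qed
    then show ?thesis
      unfolding D by (intro mult_le_mono2 prod_mono) auto
  qed
  also have "\<dots> \<le> H * (C * ((M * 4 ^ N) ^ k) ^ d)"
    using D_le \<open>x \<le> (M * 4 ^ N) ^ k\<close> by (meson le_trans mult_le_mono2 power_mono zero_le)
  also have "\<dots> = (H * C * M ^ (k * d)) * 4 ^ (N * (k * d))"
    by (simp add: power_mult_distrib mult_ac flip: power_mult)
  finally have "2 ^ N \<le> H * C * M ^ (k * d)"
    by simp
  with less_exp[of N] have "N < H * C * M ^ (k * d)"
    by linarith
  then show ?thesis
    by (simp only: H_def M_def N_def)
qed

lemma sum_exponents_bounded_poly:
  fixes a :: int and P Q :: "int poly" and A :: "'i \<Rightarrow> nat" and g :: "'i \<Rightarrow> nat \<Rightarrow> nat"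
  assumes I: "finite I" and A: "\<forall>i\<in>I. A i > 0" and g: "\<forall>i\<in>I. factorial_like (g i)"
    and "e \<ge> 1" and P: "P = [:-a, 1:] ^ e * Q"
  shows "\<exists>B. \<forall>m x. x \<in> F k \<longrightarrow> poly P (int x + a) = int (\<Prod>i\<in>I. A i ^ m i * g i (m i))
           \<longrightarrow> (\<Sum>i\<in>I. m i) < B"
proof -
  define P' where "P' = P \<circ>\<^sub>p [:a, 1:]"
  define C where "C = nat (\<Sum>i\<le>degree P'. \<bar>coeff P' i\<bar>)"
  define E :: nat where "E = 2 * 4 ^ (k * degree P')"
  show ?thesis
  proof (intro exI allI impI)
    fix m x
    assume x: "x \<in> F k" and eq: "poly P (int x + a) = int (\<Prod>i\<in>I. A i ^ m i * g i (m i))"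
    define D where "D = (\<Prod>i\<in>I. A i ^ m i * g i (m i))"
    have "int x dvd int x ^ e"
      using \<open>e \<ge> 1\<close> by (simp add: dvd_power)
    then have "int x dvd poly P (int x + a)"
      by (simp add: P poly_power dvd_mult2)
    then have "x dvd D"
      using eq by (simp add: D_def del: of_nat_prod)
    have "x \<ge> 1"
      using x by (simp add: F_def)
    have "int D = poly P' (int x)"
      using eq by (simp add: D_def P'_def poly_pcompose add.commute)
    also have "\<dots> \<le> (\<Sum>i\<le>degree P'. \<bar>coeff P' i\<bar>) * int x ^ degree P'"
      using \<open>x \<ge> 1\<close> poly_abs_le_coeff_sum[of "int x" P'] by simp
    also have "\<dots> = int (C * x ^ degree P')"
      by (simp add: C_def sum_nonneg)
    finally have "D \<le> C * x ^ degree P'"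
      by linarith
    then show "(\<Sum>i\<in>I. m i) < (E ^ (E * E + 2)) ^ card I * C * (\<Prod>i\<in>I. A i) ^ (k * degree P')"
      unfolding E_def using sum_exponents_bound[OF I A g x \<open>x dvd D\<close>] D_def by blast
  qed
qed

definition fact_dfact_product :: "(nat \<Rightarrow> nat) \<Rightarrow> nat \<Rightarrow> nat \<Rightarrow> nat list \<Rightarrow> nat" where
  "fact_dfact_product A s r n =
     (\<Prod>i\<in>{1..s}. A i ^ (n ! (i - 1)) * fact (n ! (i - 1)))
     * (\<Prod>i\<in>{s+1..r}. A i ^ (n ! (i - 1)) * dfact (n ! (i - 1)))"

lemma fact_dfact_product_eq:
  assumes "s \<le> r"
  shows "fact_dfact_product A s r n
       = (\<Prod>i\<in>{1..r}. A i ^ (n ! (i - 1)) * (if i \<le> s then fact else dfact) (n ! (i - 1)))"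
proof -
  let ?f = "\<lambda>i. A i ^ (n ! (i - 1)) * (if i \<le> s then fact else dfact) (n ! (i - 1))"
  have "{1..r} = {1..s} \<union> {s+1..r}"
    using assms by auto
  then have "(\<Prod>i\<in>{1..r}. ?f i) = (\<Prod>i\<in>{1..s}. ?f i) * (\<Prod>i\<in>{s+1..r}. ?f i)"
    by (simp add: prod.union_disjoint)
  also have "\<dots> = fact_dfact_product A s r n"
    unfolding fact_dfact_product_def by (intro arg_cong2[where f = "(*)"] prod.cong) auto
  finally show ?thesis ..
qed

lemma sum_exponents_bounded_fact_dfact_product:
  fixes a :: int and P Q :: "int poly"
  assumes "s \<le> r" and "\<forall>i\<in>{1..r}. A i > 0" and "e \<ge> 1" and "P = [:-a, 1:] ^ e * Q"
  shows "\<exists>B. \<forall>n x. x \<in> F k \<longrightarrow> poly P (int x + a) = int (fact_dfact_product A s r n)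
           \<longrightarrow> (\<Sum>i\<in>{1..r}. n ! (i - 1)) < B"
proof -
  let ?g = "\<lambda>i. if i \<le> s then fact else dfact"
  have "\<forall>i\<in>{1..r}. factorial_like (?g i)"
    by (simp add: factorial_like_fact factorial_like_dfact)
  then obtain B where B: "\<And>m x. x \<in> F k
      \<Longrightarrow> poly P (int x + a) = int (\<Prod>i\<in>{1..r}. A i ^ m i * ?g i (m i)) \<Longrightarrow> (\<Sum>i\<in>{1..r}. m i) < B"
    using sum_exponents_bounded_poly[OF finite_atLeastAtMost assms(2) _ assms(3,4), of ?g k] by blast
  show ?thesis
  proof (intro exI allI impI)
    fix n x
    assume "x \<in> F k" and "poly P (int x + a) = int (fact_dfact_product A s r n)"
    then have "poly P (int x + a) = int (\<Prod>i\<in>{1..r}. A i ^ (n ! (i - 1)) * ?g i (n ! (i - 1)))"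
      by (simp only: fact_dfact_product_eq[OF assms(1)])
    from B[OF \<open>x \<in> F k\<close> this] show "(\<Sum>i\<in>{1..r}. n ! (i - 1)) < B" .
  qed
qed

lemma finite_lists_bounded_sum:
  "finite {n :: nat list. length n = r \<and> (\<Sum>i\<in>{1..r}. n ! (i - 1)) < B}"
proof (rule finite_subset)
  show "{n. length n = r \<and> (\<Sum>i\<in>{1..r}. n ! (i - 1)) < B} \<subseteq> {n. set n \<subseteq> {..<B} \<and> length n = r}"
  proof
    fix n :: "nat list"
    assume "n \<in> {n. length n = r \<and> (\<Sum>i\<in>{1..r}. n ! (i - 1)) < B}"
    then have len: "length n = r" and sum: "(\<Sum>i\<in>{1..r}. n ! (i - 1)) < B"
      by auto
    have "n ! j < B" if "j < r" for j
    proof -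
      have "n ! ((j + 1) - 1) \<le> (\<Sum>i\<in>{1..r}. n ! (i - 1))"
        using that by (intro member_le_sum) auto
      with sum show ?thesis
        by simp
    qed
    with len show "n \<in> {n. set n \<subseteq> {..<B} \<and> length n = r}"
      by (auto simp: in_set_conv_nth)
  qed
qed (rule finite_lists_length_eq, simp)

lemma finite_poly_level_set:
  fixes p :: "'a::idom poly"
  assumes "degree p \<noteq> 0"
  shows "finite {x. poly p x = c}"
proof -
  have "p - [:c:] \<noteq> 0"
    using assms by auto
  then show ?thesis
    using poly_roots_finite[of "p - [:c:]"] by simp
qed

lemma finite_solutions_if_sum_bounded:
  fixes S :: "(nat list \<times> 'a::idom) set" and P :: "'a poly"
  assumes "degree P \<noteq> 0"
    and "\<And>n y. (n, y) \<in> S \<Longrightarrow> length n = r \<and> (\<Sum>i\<in>{1..r}. n ! (i - 1)) < B \<and> poly P y = D n"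
  shows "finite S"
proof (rule finite_subset)
  show "S \<subseteq> Sigma {n. length n = r \<and> (\<Sum>i\<in>{1..r}. n ! (i - 1)) < B} (\<lambda>n. {y. poly P y = D n})"
  proof
    fix z assume "z \<in> S"
    moreover obtain n y where "z = (n, y)"
      by fastforce
    ultimately show "z \<in> Sigma {n. length n = r \<and> (\<Sum>i\<in>{1..r}. n ! (i - 1)) < B} (\<lambda>n. {y. poly P y = D n})"
      using assms(2)[of n y] by simp
  qed
  show "finite (Sigma {n. length n = r \<and> (\<Sum>i\<in>{1..r}. n ! (i - 1)) < B} (\<lambda>n. {y. poly P y = D n}))"
    by (intro finite_SigmaI finite_lists_bounded_sum finite_poly_level_set assms(1))
qed

theorem theorem4:
  fixes k r s e t :: nat and a :: int and A :: "nat \<Rightarrow> nat"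
    and P :: "int poly" and Ps :: "nat \<Rightarrow> int poly" and es :: "nat \<Rightarrow> nat"
  assumes "k \<ge> 2" and "s \<le> r" and "r \<ge> 1"
    and "\<forall>i\<in>{1..r}. A i > 0"
    and "e \<ge> 1" and "\<forall>j\<in>{1..t}. es j \<ge> 1"
    and "\<forall>j\<in>{1..t}. irreducible (Ps j)" and "inj_on Ps {1..t}"
    and "P = [:-a, 1:] ^ e * (\<Prod>j\<in>{1..t}. Ps j ^ es j)"
  shows "finite {(n, y). length n = r \<and> (\<forall>i<r. n ! i > 0)
            \<and> (\<exists>x\<in>F k. y = int x + a)
            \<and> poly P y = int ((\<Prod>i\<in>{1..s}. A i ^ (n ! (i - 1)) * fact (n ! (i - 1)))
                            * (\<Prod>i\<in>{s+1..r}. A i ^ (n ! (i - 1)) * dfact (n ! (i - 1))))}"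
proof -
  obtain B where B: "\<And>n x. x \<in> F k \<Longrightarrow> poly P (int x + a) = int (fact_dfact_product A s r n)
      \<Longrightarrow> (\<Sum>i\<in>{1..r}. n ! (i - 1)) < B"
    using sum_exponents_bounded_fact_dfact_product[OF assms(2,4,5,9), of k] by blast
  \<comment> \<open>Irreducibility only serves to make the factors nonzero.\<close>
  have "(\<Prod>j\<in>{1..t}. Ps j ^ es j) \<noteq> 0"
    using assms(7) by auto
  then have "degree P \<noteq> 0"
    using assms(5,9) by (simp add: degree_mult_eq degree_linear_power)
  have "finite {(n, y). length n = r \<and> (\<forall>i<r. n ! i > 0) \<and> (\<exists>x\<in>F k. y = int x + a)
                        \<and> poly P y = int (fact_dfact_product A s r n)}"
    by (rule finite_solutions_if_sum_bounded[OF \<open>degree P \<noteq> 0\<close>,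
          where r = r and B = B and D = "\<lambda>n. int (fact_dfact_product A s r n)"])
       (use B in auto)
  then show ?thesis
    unfolding fact_dfact_product_def .
qed

end
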